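(* Let $f^{(0)}(w),\dots,f^{(n)}(w)$ be real $C^2$ functions in a Jordan domain in $\mathbb{C}$ (coordinate $w=x+iy$) such that $f^{(0)}_{ww}f^{(0)}_{\bar w\bar w}>0$. Then $f(w,t)=\sum_{m=0}^n f^{(m)}(w)t^m/m!$ satisfies $f_{w\bar w}=t\sqrt{f_{ww}f_{\bar w\bar w}}+o(t^n)$ as $t\to0$ if and only if, for $m=0,\dots,n$, $$f^{(m)}_{w\bar w}=\frac{m\sum_{r=0}^{m-1}\binom{m-1}{r}f^{(r)}_{ww}f^{(m-r-1)}_{\bar w\bar w}-\frac{1}{m+1}\sum_{r=2}^{m-1}\binom{m+1}{r}f^{(r)}_{w\bar w}f^{(m-r+1)}_{w\bar w}}{2^{1-\delta_{m1}}\sqrt{f^{(0)}_{ww}f^{(0)}_{\bar w\bar w}}}.$$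
   Context: Wirtinger derivatives: $f_w=\tfrac12(f_x-if_y)$, $f_{\bar w}=\tfrac12(f_x+if_y)$. $\delta_{mn}=1$ if $m=n$, else $0$; empty sums are $0$. *)

theory Defs
  imports "HOL-Analysis.Analysis" "HOL-Library.Complex_Order" "HOL-Library.Landau_Symbols"
begin

definition dx :: "(complex \<Rightarrow> 'a::real_normed_vector) \<Rightarrow> complex \<Rightarrow> 'a" where
  "dx h w = vector_derivative (\<lambda>s::real. h (w + of_real s)) (at 0)"

definition dy :: "(complex \<Rightarrow> 'a::real_normed_vector) \<Rightarrow> complex \<Rightarrow> 'a" where
  "dy h w = vector_derivative (\<lambda>s::real. h (w + \<i> * of_real s)) (at 0)"

definition Dw :: "(complex \<Rightarrow> complex) \<Rightarrow> complex \<Rightarrow> complex" where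
  "Dw h w = (dx h w - \<i> * dy h w) / 2"

definition Dwb :: "(complex \<Rightarrow> complex) \<Rightarrow> complex \<Rightarrow> complex" where
  "Dwb h w = (dx h w + \<i> * dy h w) / 2"

definition f_ww :: "(complex \<Rightarrow> real) \<Rightarrow> complex \<Rightarrow> complex" where
  "f_ww g = Dw (Dw (\<lambda>z. complex_of_real (g z)))"

definition f_wwb :: "(complex \<Rightarrow> real) \<Rightarrow> complex \<Rightarrow> complex" where
  "f_wwb g = Dw (Dwb (\<lambda>z. complex_of_real (g z)))"

definition f_wbwb :: "(complex \<Rightarrow> real) \<Rightarrow> complex \<Rightarrow> complex" where
  "f_wbwb g = Dwb (Dwb (\<lambda>z. complex_of_real (g z)))"

definition C2_on :: "complex set \<Rightarrow> (complex \<Rightarrow> real) \<Rightarrow> bool" where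
  "C2_on D g \<longleftrightarrow>
     (\<forall>w\<in>D. g differentiable (at w) \<and> dx g differentiable (at w) \<and> dy g differentiable (at w))
     \<and> continuous_on D (dx (dx g)) \<and> continuous_on D (dy (dx g))
     \<and> continuous_on D (dx (dy g)) \<and> continuous_on D (dy (dy g))"

definition jordan_domain :: "complex set \<Rightarrow> bool" where
  "jordan_domain D \<longleftrightarrow> (\<exists>c. simple_path c \<and> pathfinish c = pathstart c \<and> D = inside (path_image c))"

end

theory Submission
  imports Defs "HOL-Computational_Algebra.Polynomial"
begin

(* Fix a point w and put a_m = f^(m)_ww(w), c_m = f^(m)_{w wbar}(w).  For real C^2 functions
   f_{wbar wbar} is the conjugate of f_ww, and the Wirtinger derivatives of f(., t) at w are the
   truncated exponential generating polynomials P(t) = sum a_m t^m/m! and T(t) = sum c_m t^m/m!,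
   so the asymptotic condition reads T(t) - t |P(t)| = o(t^n).  Writing T = c_0 + t sigma, this
   says c_0 = 0 and sigma - |P| = o(t^(n-1)).  The latter forces c_1 = |a_0| <> 0, after which
   sigma + |P| is bounded away from 0, so it is equivalent to the polynomial sigma^2 - P conj(P)
   vanishing to order n - 1.  Multiplied by (m+1)!, the coefficient of t^(m-1) of that polynomial
   is a binomial convolution, and solving it for c_m gives the stated recursion. *)

lemma of_real_cmod_mult_self: "complex_of_real (cmod z) * of_real (cmod z) = z * cnj z"
  by (metis complex_norm_square of_real_mult power2_eq_square)

lemma csqrt_mult_cnj: "csqrt (z * cnj z) = of_real (cmod z)"
  by (simp flip: complex_norm_square)

definition egf_poly :: "nat \<Rightarrow> (nat \<Rightarrow> 'a) \<Rightarrow> 'a::field_char_0 poly" where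
  "egf_poly n a = (\<Sum>m\<le>n. monom (a m / fact m) m)"

lemma coeff_egf_poly: "coeff (egf_poly n a) i = (if i \<le> n then a i / fact i else 0)"
  by (simp add: egf_poly_def coeff_sum coeff_monom)

lemma poly_egf_poly: "poly (egf_poly n a) x = (\<Sum>m\<le>n. a m * x ^ m / fact m)"
  by (simp add: egf_poly_def poly_sum poly_monom)

lemma map_poly_cnj_egf_poly: "map_poly cnj (egf_poly n a) = egf_poly n (\<lambda>m. cnj (a m))"
  by (rule poly_eqI) (simp add: coeff_map_poly coeff_egf_poly)

lemma egf_poly_cong: "(\<And>m. m \<le> n \<Longrightarrow> a m = b m) \<Longrightarrow> egf_poly n a = egf_poly n b"
  by (simp add: egf_poly_def)

lemma fact_mult_div_fact_mult_div_fact: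
  fixes x y :: "'a::field_char_0"
  assumes "i \<le> k"
  shows "fact k * (x / fact i * (y / fact (k - i))) = of_nat (k choose i) * x * y"
  using assms by (simp add: binomial_fact field_simps)

lemma fact_mult_coeff_egf_poly_mult:
  assumes "k \<le> n"
  shows "fact k * coeff (egf_poly n a * egf_poly n b) k = (\<Sum>r\<le>k. of_nat (k choose r) * a r * b (k - r))"
  unfolding coeff_mult sum_distrib_left
proof (rule sum.cong)
  fix i assume "i \<in> {..k}"
  then have "i \<le> k" "i \<le> n" "k - i \<le> n" using assms by auto
  then show "fact k * (coeff (egf_poly n a) i * coeff (egf_poly n b) (k - i)) =
             of_nat (k choose i) * a i * b (k - i)"
    by (simp only: coeff_egf_poly if_True fact_mult_div_fact_mult_div_fact)
qed simp

lemma fact_mult_coeff_poly_shift_egf_poly_square: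
  assumes "k < n"
  shows "fact (k + 2) * coeff (poly_shift 1 (egf_poly n c) ^ 2) k =
         (\<Sum>r=1..k+1. of_nat ((k + 2) choose r) * c r * c (k + 2 - r))"
proof -
  have shift: "coeff (poly_shift 1 (egf_poly n c)) j = c (Suc j) / fact (Suc j)" if "j < n" for j
    using that by (simp add: coeff_poly_shift coeff_egf_poly)
  have "fact (k + 2) * coeff (poly_shift 1 (egf_poly n c) ^ 2) k =
        (\<Sum>i=0..k. of_nat ((k + 2) choose Suc i) * c (Suc i) * c (k + 2 - Suc i))"
    unfolding power2_eq_square coeff_mult sum_distrib_left atMost_atLeast0
  proof (rule sum.cong)
    fix i assume "i \<in> {0..k}"
    then have i: "Suc i \<le> k + 2" "k + 2 - Suc i = Suc (k - i)" "i < n" "k - i < n"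
      using assms by auto
    show "fact (k + 2) * (coeff (poly_shift 1 (egf_poly n c)) i * coeff (poly_shift 1 (egf_poly n c)) (k - i)) =
          of_nat ((k + 2) choose Suc i) * c (Suc i) * c (k + 2 - Suc i)"
      using fact_mult_div_fact_mult_div_fact[OF i(1), of "c (Suc i)" "c (Suc (k - i))"]
      by (simp only: shift i(2-4))
  qed simp
  also have "\<dots> = (\<Sum>r=1..k+1. of_nat ((k + 2) choose r) * c r * c (k + 2 - r))"
    by (subst sum.shift_bounds_cl_Suc_ivl[symmetric]) simp
  finally show ?thesis .
qed

lemma coeff_poly_shift_egf_poly_square_minus_eq_0_iff:
  fixes a b c :: "nat \<Rightarrow> 'a::field_char_0"
  assumes m: "2 \<le> m" "m \<le> n" and c1: "c 1 = \<alpha>" and \<alpha>: "\<alpha> \<noteq> 0"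
  shows "coeff (poly_shift 1 (egf_poly n c) ^ 2 - egf_poly n a * egf_poly n b) (m - 1) = 0 \<longleftrightarrow>
         c m = (of_nat m * (\<Sum>r<m. of_nat ((m - 1) choose r) * a r * b (m - r - 1))
                - (1 / of_nat (m + 1)) * (\<Sum>r\<in>{2..<m}. of_nat ((m + 1) choose r) * c r * c (m - r + 1)))
               / (2 * \<alpha>)"
proof -
  define S1 where "S1 = (\<Sum>r<m. of_nat ((m - 1) choose r) * a r * b (m - r - 1))"
  define S2 where "S2 = (\<Sum>r\<in>{2..<m}. of_nat ((m + 1) choose r) * c r * c (m - r + 1))"
  have "{..m - 1} = {..<m}" using m by auto
  then have conv: "fact (m - 1) * coeff (egf_poly n a * egf_poly n b) (m - 1) = S1"
    using fact_mult_coeff_egf_poly_mult[of "m - 1" n a b] m by (simp add: S1_def diff_right_commute)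
  have square: "fact (m + 1) * coeff (poly_shift 1 (egf_poly n c) ^ 2) (m - 1) =
                2 * of_nat (m + 1) * \<alpha> * c m + S2"
  proof -
    have "{1..m} = insert 1 (insert m {2..<m})" using m by auto
    then have "(\<Sum>r=1..m. of_nat ((m + 1) choose r) * c r * c (m + 1 - r)) =
               of_nat (m + 1) * c 1 * c m + of_nat (m + 1) * c m * c 1 + S2"
      unfolding S2_def using m by (simp add: Suc_diff_le binomial_symmetric[of m "m + 1"])
    then show ?thesis
      using fact_mult_coeff_poly_shift_egf_poly_square[of "m - 1" n c] m c1
      by (simp add: algebra_simps)
  qed
  have fact_eq: "fact (m + 1) = of_nat (m + 1) * of_nat m * (fact (m - 1) :: 'a)"
    using m by (simp add: fact_reduce[of m] algebra_simps)
  have "coeff (poly_shift 1 (egf_poly n c) ^ 2 - egf_poly n a * egf_poly n b) (m - 1) = 0 \<longleftrightarrow>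
        fact (m + 1) * coeff (poly_shift 1 (egf_poly n c) ^ 2) (m - 1) =
        fact (m + 1) * coeff (egf_poly n a * egf_poly n b) (m - 1)"
    by (simp only: coeff_diff right_minus_eq mult_cancel_left fact_nonzero simp_thms)
  also have "\<dots> \<longleftrightarrow> 2 * of_nat (m + 1) * \<alpha> * c m + S2 = of_nat (m + 1) * of_nat m * S1"
    by (subst square, subst fact_eq, simp only: mult.assoc conv)
  also have "\<dots> \<longleftrightarrow>
      of_nat (m + 1) * (c m * (2 * \<alpha>)) = of_nat (m + 1) * (of_nat m * S1 - (1 / of_nat (m + 1)) * S2)"
  proof -
    have "of_nat (m + 1) * ((1 / of_nat (m + 1)) * S2) = S2"
      using of_nat_neq_0[of m, where 'a = 'a] by simp
    then show ?thesis by (simp only: right_diff_distrib) (auto simp: algebra_simps)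
  qed
  also have "\<dots> \<longleftrightarrow> c m = (of_nat m * S1 - (1 / of_nat (m + 1)) * S2) / (2 * \<alpha>)"
    using \<alpha> by (simp only: mult_cancel_left of_nat_eq_0_iff add_eq_0_iff_both_eq_0 one_neq_zero simp_thms)
       (simp add: eq_divide_eq)
  finally show ?thesis unfolding S1_def S2_def .
qed

lemma recursion_iff_egf_poly_square_coeffs:
  fixes a b c :: "nat \<Rightarrow> complex"
  assumes a0: "a 0 \<noteq> 0" and b: "\<forall>j\<le>n. b j = cnj (a j)"
  shows "(\<forall>m\<le>n. c m =
            (of_nat m * (\<Sum>r<m. of_nat ((m - 1) choose r) * a r * b (m - r - 1))
             - (1 / of_nat (m + 1)) * (\<Sum>r\<in>{2..<m}. of_nat ((m + 1) choose r) * c r * c (m - r + 1)))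
            / (2 ^ (1 - (if m = 1 then 1 else 0)) * csqrt (a 0 * b 0))) \<longleftrightarrow>
         c 0 = 0 \<and> (0 < n \<longrightarrow> c 1 = of_real (cmod (a 0))) \<and>
         (\<forall>k<n. coeff (poly_shift 1 (egf_poly n c) ^ 2 - egf_poly n a * map_poly cnj (egf_poly n a)) k = 0)"
  (is "(\<forall>m\<le>n. ?R m) \<longleftrightarrow> _")
proof -
  define \<alpha> where "\<alpha> = complex_of_real (cmod (a 0))"
  define R where "R = (\<lambda>m. ?R m)"
  define Q where "Q = poly_shift 1 (egf_poly n c) ^ 2 - egf_poly n a * egf_poly n b"
  have \<alpha>: "\<alpha> \<noteq> 0" "csqrt (a 0 * b 0) = \<alpha>" "a 0 * b 0 = \<alpha> * \<alpha>"
    using a0 b by (simp_all add: \<alpha>_def csqrt_mult_cnj of_real_cmod_mult_self)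
  have R0: "R 0 \<longleftrightarrow> c 0 = 0" by (simp add: R_def)
  have R1: "R 1 \<longleftrightarrow> c 1 = \<alpha>" using \<alpha> by (simp add: R_def)
  have Q0: "coeff Q 0 = 0" if "0 < n" "c 1 = \<alpha>"
    using that \<alpha>(3) by (simp add: Q_def coeff_mult_0 coeff_poly_shift coeff_egf_poly power2_eq_square)
  have Rm: "R m \<longleftrightarrow> coeff Q (m - 1) = 0" if "2 \<le> m" "m \<le> n" "c 1 = \<alpha>" for m
    using coeff_poly_shift_egf_poly_square_minus_eq_0_iff[where a = a and b = b and c = c, OF that \<alpha>(1)]
      that(1) \<alpha>(2)
    by (simp add: R_def Q_def)
  have "(\<forall>m\<le>n. R m) \<longleftrightarrow> c 0 = 0 \<and> (0 < n \<longrightarrow> c 1 = \<alpha>) \<and> (\<forall>k<n. coeff Q k = 0)"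
  proof (cases "n = 0")
    case False
    have "(\<forall>m\<le>n. R m) \<longleftrightarrow> R 0 \<and> R 1 \<and> (\<forall>m\<in>{2..n}. R m)"
    proof
      assume R: "R 0 \<and> R 1 \<and> (\<forall>m\<in>{2..n}. R m)"
      show "\<forall>m\<le>n. R m"
      proof (intro allI impI)
        fix m assume "m \<le> n"
        then consider "m = 0" | "m = 1" | "m \<in> {2..n}" by force
        then show "R m" using R by cases auto
      qed
    qed (use False in auto)
    moreover have "(\<forall>m\<in>{2..n}. R m) \<longleftrightarrow> (\<forall>k<n. coeff Q k = 0)" if c1: "c 1 = \<alpha>"
    proof
      assume R: "\<forall>m\<in>{2..n}. R m"
      show "\<forall>k<n. coeff Q k = 0"
      proof (intro allI impI)
        fix k assume "k < n"
        with Q0[OF _ c1] R Rm[of "k + 1", OF _ _ c1] show "coeff Q k = 0" by (cases k) auto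
      qed
    qed (use Rm[OF _ _ that] in auto)
    ultimately show ?thesis using False R0 R1 by auto
  qed (use R0 in simp)
  moreover have "egf_poly n b = map_poly cnj (egf_poly n a)"
    using b by (simp add: map_poly_cnj_egf_poly cong: egf_poly_cong)
  ultimately show ?thesis by (simp only: R_def Q_def \<alpha>_def)
qed

lemma differentiable_at_imp_line_differentiable:
  fixes h :: "complex \<Rightarrow> 'a::real_normed_vector"
  assumes "h differentiable (at z)"
  shows "(\<lambda>s::real. h (z + d * of_real s)) differentiable (at 0)"
proof -
  have "(\<lambda>s::real. z + d * of_real s) differentiable (at 0)"
    by (rule differentiableI) (auto intro!: derivative_eq_intros)
  then show ?thesis
    using differentiable_chain_at[of "\<lambda>s::real. z + d * of_real s" 0 h] assms by (simp add: o_def)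
qed

lemma has_real_derivative_dx:
  fixes h :: "complex \<Rightarrow> real"
  assumes "h differentiable (at z)"
  shows "((\<lambda>s. h (z + of_real s)) has_real_derivative dx h z) (at 0)"
  using differentiable_at_imp_line_differentiable[OF assms, of 1]
  by (simp add: dx_def vector_derivative_works has_real_derivative_iff_has_vector_derivative)

lemma has_real_derivative_dy:
  fixes h :: "complex \<Rightarrow> real"
  assumes "h differentiable (at z)"
  shows "((\<lambda>s. h (z + \<i> * of_real s)) has_real_derivative dy h z) (at 0)"
  using differentiable_at_imp_line_differentiable[OF assms, of "\<i>"]
  by (simp add: dy_def vector_derivative_works has_real_derivative_iff_has_vector_derivative)

lemma vector_derivative_line_combination:
  fixes X Y :: "complex \<Rightarrow> real" and H :: "complex \<Rightarrow> complex"
  assumes "open D" "w \<in> D" "\<And>z. z \<in> D \<Longrightarrow> H z = u * of_real (X z) + v * of_real (Y z)"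
    and "((\<lambda>s. X (w + d * of_real s)) has_real_derivative X') (at 0)"
    and "((\<lambda>s. Y (w + d * of_real s)) has_real_derivative Y') (at 0)"
  shows "vector_derivative (\<lambda>s::real. H (w + d * of_real s)) (at 0) = u * of_real X' + v * of_real Y'"
proof (rule vector_derivative_at)
  have "((\<lambda>s. u * of_real (X (w + d * of_real s)) + v * of_real (Y (w + d * of_real s)))
          has_vector_derivative u * of_real X' + v * of_real Y') (at 0)"
    by (intro derivative_intros assms(4,5))
  moreover have "open ((\<lambda>s::real. w + d * of_real s) -` D)"
    by (rule open_vimage[OF assms(1)]) (intro continuous_intros)
  ultimately show "((\<lambda>s::real. H (w + d * of_real s))
      has_vector_derivative u * of_real X' + v * of_real Y') (at 0)"
    by (rule has_vector_derivative_transform_within_open) (use assms(2,3) in auto)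
qed

lemma second_wirtinger_derivatives:
  fixes g X Y :: "complex \<Rightarrow> real"
  assumes D: "open D" "w \<in> D"
    and gx: "\<And>z. z \<in> D \<Longrightarrow> ((\<lambda>s. g (z + of_real s)) has_real_derivative X z) (at 0)"
    and gy: "\<And>z. z \<in> D \<Longrightarrow> ((\<lambda>s. g (z + \<i> * of_real s)) has_real_derivative Y z) (at 0)"
    and Xx: "((\<lambda>s. X (w + of_real s)) has_real_derivative Xx) (at 0)"
    and Xy: "((\<lambda>s. X (w + \<i> * of_real s)) has_real_derivative Xy) (at 0)"
    and Yx: "((\<lambda>s. Y (w + of_real s)) has_real_derivative Yx) (at 0)"
    and Yy: "((\<lambda>s. Y (w + \<i> * of_real s)) has_real_derivative Yy) (at 0)"
  shows "f_ww g w = (of_real Xx - of_real Yy - \<i> * (of_real Xy + of_real Yx)) / 4"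
    and "f_wwb g w = (of_real Xx + of_real Yy + \<i> * (of_real Yx - of_real Xy)) / 4"
    and "f_wbwb g w = cnj (f_ww g w)"
proof -
  let ?G = "\<lambda>z. complex_of_real (g z)"
  have "dx ?G z = of_real (X z)" "dy ?G z = of_real (Y z)" if "z \<in> D" for z
    unfolding dx_def dy_def
    by (rule vector_derivative_at, rule has_vector_derivative_of_real, rule gx gy, rule that)+
  then have Dw: "Dw ?G z = 1/2 * of_real (X z) + (- \<i> / 2) * of_real (Y z)"
    and Dwb: "Dwb ?G z = 1/2 * of_real (X z) + (\<i> / 2) * of_real (Y z)" if "z \<in> D" for z
    using that by (simp_all add: Dw_def Dwb_def field_simps)
  have Xx': "((\<lambda>s. X (w + 1 * of_real s)) has_real_derivative Xx) (at 0)"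
    and Yx': "((\<lambda>s. Y (w + 1 * of_real s)) has_real_derivative Yx) (at 0)"
    using Xx Yx by simp_all
  note line = vector_derivative_line_combination[OF D]
  have "dx (Dw ?G) w = 1/2 * of_real Xx + (- \<i> / 2) * of_real Yx"
       "dy (Dw ?G) w = 1/2 * of_real Xy + (- \<i> / 2) * of_real Yy"
       "dx (Dwb ?G) w = 1/2 * of_real Xx + (\<i> / 2) * of_real Yx"
       "dy (Dwb ?G) w = 1/2 * of_real Xy + (\<i> / 2) * of_real Yy"
    using line[OF Dw Xx' Yx'] line[OF Dw Xy Yy] line[OF Dwb Xx' Yx'] line[OF Dwb Xy Yy]
    by (simp_all add: dx_def dy_def)
  then show "f_ww g w = (of_real Xx - of_real Yy - \<i> * (of_real Xy + of_real Yx)) / 4"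
    and "f_wwb g w = (of_real Xx + of_real Yy + \<i> * (of_real Yx - of_real Xy)) / 4"
    and "f_wbwb g w = cnj (f_ww g w)"
    by (simp_all add: f_ww_def f_wwb_def f_wbwb_def Dw_def Dwb_def complex_eq_iff field_simps)
qed

lemma C2_on_differentiable:
  assumes "C2_on D g" "z \<in> D"
  shows "g differentiable (at z)" "dx g differentiable (at z)" "dy g differentiable (at z)"
  using assms unfolding C2_on_def by auto

lemma C2_on_second_wirtinger_derivatives:
  assumes "open D" "w \<in> D" "C2_on D g"
  shows "f_ww g w = (of_real (dx (dx g) w) - of_real (dy (dy g) w)
                     - \<i> * (of_real (dy (dx g) w) + of_real (dx (dy g) w))) / 4"
    and "f_wwb g w = (of_real (dx (dx g) w) + of_real (dy (dy g) w)
                     + \<i> * (of_real (dx (dy g) w) - of_real (dy (dx g) w))) / 4"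
    and "f_wbwb g w = cnj (f_ww g w)"
  using second_wirtinger_derivatives[OF assms(1,2), where X = "dx g" and Y = "dy g",
      OF has_real_derivative_dx has_real_derivative_dy has_real_derivative_dx has_real_derivative_dy
         has_real_derivative_dx has_real_derivative_dy]
    C2_on_differentiable[OF assms(3)] assms(2)
  by simp_all

lemma second_wirtinger_derivatives_sum:
  fixes g :: "'i \<Rightarrow> complex \<Rightarrow> real" and r :: "'i \<Rightarrow> real"
  assumes D: "open D" "w \<in> D" and C2: "\<And>m. m \<in> I \<Longrightarrow> C2_on D (g m)"
  shows "f_ww (\<lambda>z. \<Sum>m\<in>I. r m * g m z) w = (\<Sum>m\<in>I. of_real (r m) * f_ww (g m) w)"
    and "f_wwb (\<lambda>z. \<Sum>m\<in>I. r m * g m z) w = (\<Sum>m\<in>I. of_real (r m) * f_wwb (g m) w)"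
    and "f_wbwb (\<lambda>z. \<Sum>m\<in>I. r m * g m z) w = cnj (f_ww (\<lambda>z. \<Sum>m\<in>I. r m * g m z) w)"
proof -
  note diff = C2_on_differentiable[OF C2]
  have gx: "((\<lambda>s. \<Sum>m\<in>I. r m * g m (z + of_real s))
              has_real_derivative (\<Sum>m\<in>I. r m * dx (g m) z)) (at 0)"
    and gy: "((\<lambda>s. \<Sum>m\<in>I. r m * g m (z + \<i> * of_real s))
              has_real_derivative (\<Sum>m\<in>I. r m * dy (g m) z)) (at 0)"
    if "z \<in> D" for z
    using that by (auto intro!: DERIV_sum DERIV_cmult has_real_derivative_dx has_real_derivative_dy diff)
  have "((\<lambda>s. \<Sum>m\<in>I. r m * dx (g m) (w + of_real s))
          has_real_derivative (\<Sum>m\<in>I. r m * dx (dx (g m)) w)) (at 0)"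
    "((\<lambda>s. \<Sum>m\<in>I. r m * dx (g m) (w + \<i> * of_real s))
          has_real_derivative (\<Sum>m\<in>I. r m * dy (dx (g m)) w)) (at 0)"
    "((\<lambda>s. \<Sum>m\<in>I. r m * dy (g m) (w + of_real s))
          has_real_derivative (\<Sum>m\<in>I. r m * dx (dy (g m)) w)) (at 0)"
    "((\<lambda>s. \<Sum>m\<in>I. r m * dy (g m) (w + \<i> * of_real s))
          has_real_derivative (\<Sum>m\<in>I. r m * dy (dy (g m)) w)) (at 0)"
    using D(2) by (auto intro!: DERIV_sum DERIV_cmult has_real_derivative_dx has_real_derivative_dy diff)
  note formulas = second_wirtinger_derivatives[OF D, where g = "\<lambda>z. \<Sum>m\<in>I. r m * g m z"
      and X = "\<lambda>z. \<Sum>m\<in>I. r m * dx (g m) z" and Y = "\<lambda>z. \<Sum>m\<in>I. r m * dy (g m) z",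
      OF gx gy this]
  note each = C2_on_second_wirtinger_derivatives[OF D C2]
  show "f_ww (\<lambda>z. \<Sum>m\<in>I. r m * g m z) w = (\<Sum>m\<in>I. of_real (r m) * f_ww (g m) w)"
    by (simp add: formulas(1) each(1) of_real_sum sum_subtractf sum.distrib sum_distrib_left
                 algebra_simps flip: sum_divide_distrib cong: sum.cong)
  show "f_wwb (\<lambda>z. \<Sum>m\<in>I. r m * g m z) w = (\<Sum>m\<in>I. of_real (r m) * f_wwb (g m) w)"
    by (simp add: formulas(2) each(2) of_real_sum sum_subtractf sum.distrib sum_distrib_left
                 algebra_simps flip: sum_divide_distrib cong: sum.cong)
  show "f_wbwb (\<lambda>z. \<Sum>m\<in>I. r m * g m z) w = cnj (f_ww (\<lambda>z. \<Sum>m\<in>I. r m * g m z) w)"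
    by (simp only: formulas(3))
qed

lemma second_wirtinger_derivatives_taylor:
  fixes fm :: "nat \<Rightarrow> complex \<Rightarrow> real"
  assumes "open D" "w \<in> D" "\<forall>m\<le>n. C2_on D (fm m)"
  shows "f_ww (\<lambda>z. \<Sum>m\<le>n. fm m z * t ^ m / fact m) w =
           poly (egf_poly n (\<lambda>m. f_ww (fm m) w)) (of_real t)"
    and "f_wwb (\<lambda>z. \<Sum>m\<le>n. fm m z * t ^ m / fact m) w =
           poly (egf_poly n (\<lambda>m. f_wwb (fm m) w)) (of_real t)"
    and "f_wbwb (\<lambda>z. \<Sum>m\<le>n. fm m z * t ^ m / fact m) w =
           cnj (f_ww (\<lambda>z. \<Sum>m\<le>n. fm m z * t ^ m / fact m) w)"
  using second_wirtinger_derivatives_sum[OF assms(1,2), of "{..n}" fm "\<lambda>m. t ^ m / fact m"] assms(3)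
  by (auto simp: poly_egf_poly field_simps)

lemma smallo_bigo_1_imp_tendsto_0:
  fixes f g :: "'a \<Rightarrow> 'b::real_normed_field"
  assumes "f \<in> o[F](g)" "g \<in> O[F](\<lambda>_. 1)"
  shows "(f \<longlongrightarrow> 0) F"
  using smalloD_tendsto[OF landau_o.small_big_trans[OF assms]] by simp

lemma smallo_const_plus_iff:
  fixes f g :: "'a \<Rightarrow> 'b::real_normed_field"
  assumes "F \<noteq> bot" "(f \<longlongrightarrow> 0) F" "g \<in> O[F](\<lambda>_. 1)"
  shows "(\<lambda>x. c + f x) \<in> o[F](g) \<longleftrightarrow> c = 0 \<and> f \<in> o[F](g)"
proof
  assume small: "(\<lambda>x. c + f x) \<in> o[F](g)"
  then have "((\<lambda>x. c + f x) \<longlongrightarrow> 0) F"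
    using smallo_bigo_1_imp_tendsto_0 assms(3) by blast
  moreover have "((\<lambda>x. c + f x) \<longlongrightarrow> c + 0) F"
    by (intro tendsto_intros assms(2))
  ultimately have "c = 0"
    using tendsto_unique[OF assms(1)] by fastforce
  with small show "c = 0 \<and> f \<in> o[F](g)" by simp
qed simp

lemma power_in_bigo_1_at_0: "(\<lambda>t::real. (of_real t :: 'a::real_normed_field) ^ n) \<in> O[at 0](\<lambda>_. 1)"
proof -
  have "((\<lambda>t::real. (of_real t :: 'a) ^ n) \<longlongrightarrow> of_real 0 ^ n) (at 0)"
    by (intro tendsto_intros)
  then show ?thesis
    by (intro bigoI_tendsto[where c = "of_real 0 ^ n"]) simp_all
qed

lemma of_real_mult_smallo_power_iff:
  fixes u :: "real \<Rightarrow> 'a::real_normed_field"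
  shows "(\<lambda>t. of_real t * u t) \<in> o[at 0](\<lambda>t. of_real t ^ Suc k) \<longleftrightarrow>
         u \<in> o[at 0](\<lambda>t. of_real t ^ k)"
  unfolding power_Suc
  by (rule landau_o.small.mult_cancel_left) (auto simp: eventually_at_filter)

lemma const_plus_of_real_mult_smallo_power_iff:
  fixes u :: "real \<Rightarrow> 'a::real_normed_field"
  assumes "(u \<longlongrightarrow> L) (at 0)"
  shows "(\<lambda>t. c + of_real t * u t) \<in> o[at 0](\<lambda>t. of_real t ^ k) \<longleftrightarrow>
         c = 0 \<and> (k = 0 \<or> u \<in> o[at 0](\<lambda>t. of_real t ^ (k - 1)))"
proof -
  have lim: "((\<lambda>t. of_real t * u t) \<longlongrightarrow> 0) (at 0)"
    using tendsto_mult[OF tendsto_of_real[OF tendsto_ident_at] assms] by simp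
  have "(\<lambda>t. c + of_real t * u t) \<in> o[at 0](\<lambda>t. of_real t ^ k) \<longleftrightarrow>
        c = 0 \<and> (\<lambda>t. of_real t * u t) \<in> o[at 0](\<lambda>t. of_real t ^ k)"
    by (rule smallo_const_plus_iff[OF at_neq_bot lim power_in_bigo_1_at_0])
  also have "(\<lambda>t. of_real t * u t) \<in> o[at 0](\<lambda>t. of_real t ^ k) \<longleftrightarrow>
             k = 0 \<or> u \<in> o[at 0](\<lambda>t. of_real t ^ (k - 1))"
    using smalloI_tendsto[of _ "\<lambda>_. 1"] lim of_real_mult_smallo_power_iff[of u "k - 1"]
    by (cases k) simp_all
  finally show ?thesis .
qed

lemma poly_of_real_smallo_power_iff:
  fixes p :: "'a::real_normed_field poly"
  shows "(\<lambda>t::real. poly p (of_real t)) \<in> o[at 0](\<lambda>t. of_real t ^ k) \<longleftrightarrow>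
         (\<forall>i\<le>k. coeff p i = 0)"
proof (induction p arbitrary: k rule: pCons_induct)
  case (pCons a q)
  have "((\<lambda>t::real. poly q (of_real t)) \<longlongrightarrow> poly q (of_real 0)) (at 0)"
    by (intro tendsto_intros)
  from const_plus_of_real_mult_smallo_power_iff[OF this, of a k] show ?case
    by (cases k) (simp_all add: pCons.IH All_less_Suc2 flip: less_Suc_eq_le)
qed simp

lemma pCons_coeff_0_poly_shift_1: "pCons (coeff p 0) (poly_shift 1 p) = p"
  by (rule poly_eqI) (simp add: coeff_pCons coeff_poly_shift split: nat.split)

lemma tendsto_imp_bigtheta_1:
  fixes f :: "'a \<Rightarrow> 'b::real_normed_field"
  assumes "(f \<longlongrightarrow> L) F" "L \<noteq> 0"
  shows "f \<in> \<Theta>[F](\<lambda>_. 1)"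
  using assms by (intro bigthetaI_tendsto_norm[where c = "norm L"]) (simp_all add: tendsto_norm)

lemma poly_minus_of_real_mult_norm_poly_smallo_iff:
  fixes p q :: "complex poly"
  assumes p0: "coeff p 0 \<noteq> 0"
  shows "(\<lambda>t::real. poly q (of_real t) - of_real t * of_real (cmod (poly p (of_real t))))
           \<in> o[at 0](\<lambda>t. of_real t ^ n) \<longleftrightarrow>
         coeff q 0 = 0 \<and> (0 < n \<longrightarrow> coeff q 1 = of_real (cmod (coeff p 0))) \<and>
         (\<forall>k<n. coeff (poly_shift 1 q ^ 2 - p * map_poly cnj p) k = 0)"
proof -
  define \<sigma> where "\<sigma> t = poly (poly_shift 1 q) (of_real t)" for t :: real
  define S where "S t = complex_of_real (cmod (poly p (of_real t)))" for t :: real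
  let ?Q = "poly_shift 1 q ^ 2 - p * map_poly cnj p"
  have q_eq: "poly q (of_real t) = coeff q 0 + of_real t * \<sigma> t" for t
    unfolding \<sigma>_def by (subst (1) pCons_coeff_0_poly_shift_1[symmetric]) simp
  have Q_eq: "poly ?Q (of_real t) = (\<sigma> t + S t) * (\<sigma> t - S t)" for t
    unfolding \<sigma>_def S_def by (simp add: of_real_cmod_mult_self power2_eq_square algebra_simps)
  have "(\<sigma> \<longlongrightarrow> poly (poly_shift 1 q) (of_real 0)) (at 0)"
    unfolding \<sigma>_def by (intro tendsto_intros)
  then have \<sigma>_lim: "(\<sigma> \<longlongrightarrow> coeff q 1) (at 0)"
    by (simp add: poly_0_coeff_0 coeff_poly_shift)
  have "(S \<longlongrightarrow> of_real (cmod (poly p (of_real 0)))) (at 0)"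
    unfolding S_def by (intro tendsto_intros)
  then have S_lim: "(S \<longlongrightarrow> of_real (cmod (coeff p 0))) (at 0)"
    by (simp add: poly_0_coeff_0)
  have diff_smallo_iff: "(\<lambda>t. \<sigma> t - S t) \<in> o[at 0](\<lambda>t. of_real t ^ k) \<longleftrightarrow>
      coeff q 1 = of_real (cmod (coeff p 0)) \<and> (\<forall>i\<le>k. coeff ?Q i = 0)" for k
  proof -
    have "(\<lambda>t. \<sigma> t - S t) \<in> o[at 0](\<lambda>t. of_real t ^ k) \<longleftrightarrow>
        coeff q 1 = of_real (cmod (coeff p 0)) \<and>
        (\<lambda>t. \<sigma> t - S t) \<in> o[at 0](\<lambda>t. of_real t ^ k)"
    proof (intro iffI conjI)
      assume small: "(\<lambda>t. \<sigma> t - S t) \<in> o[at 0](\<lambda>t. of_real t ^ k)"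
      have "((\<lambda>t. \<sigma> t - S t) \<longlongrightarrow> 0) (at 0)"
        using smallo_bigo_1_imp_tendsto_0[OF small power_in_bigo_1_at_0] .
      with tendsto_diff[OF \<sigma>_lim S_lim] show "coeff q 1 = of_real (cmod (coeff p 0))"
        using tendsto_unique[OF at_neq_bot] by fastforce
    qed auto
    also have "\<dots> \<longleftrightarrow> coeff q 1 = of_real (cmod (coeff p 0)) \<and>
        (\<lambda>t. poly ?Q (of_real t)) \<in> o[at 0](\<lambda>t. of_real t ^ k)"
    proof -
      have "(\<lambda>t. \<sigma> t + S t) \<in> \<Theta>[at 0](\<lambda>_. 1)"
        if "coeff q 1 = of_real (cmod (coeff p 0))"
        using tendsto_imp_bigtheta_1[OF tendsto_add[OF \<sigma>_lim S_lim]] that p0 by simp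
      from landau_o.small.mult_cancel_left[OF this, of "\<lambda>t. \<sigma> t - S t" "\<lambda>t. of_real t ^ k"]
      show ?thesis unfolding Q_eq by auto
    qed
    finally show ?thesis by (simp only: poly_of_real_smallo_power_iff)
  qed
  have "poly q (of_real t) - of_real t * S t = coeff q 0 + of_real t * (\<sigma> t - S t)" for t
    by (simp add: q_eq algebra_simps)
  then show ?thesis
    using const_plus_of_real_mult_smallo_power_iff[OF tendsto_diff[OF \<sigma>_lim S_lim], of "coeff q 0" n]
    unfolding S_def[symmetric] by (cases n) (simp_all add: diff_smallo_iff less_Suc_eq_le)
qed

lemma egf_poly_minus_norm_smallo_iff_recursion:
  fixes a b c :: "nat \<Rightarrow> complex"
  assumes a0: "a 0 \<noteq> 0" and b: "\<forall>j\<le>n. b j = cnj (a j)"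
  shows "(\<lambda>t::real. poly (egf_poly n c) (of_real t)
             - of_real t * of_real (cmod (poly (egf_poly n a) (of_real t))))
           \<in> o[at 0](\<lambda>t. of_real t ^ n) \<longleftrightarrow>
         (\<forall>m\<le>n. c m =
            (of_nat m * (\<Sum>r<m. of_nat ((m - 1) choose r) * a r * b (m - r - 1))
             - (1 / of_nat (m + 1)) * (\<Sum>r\<in>{2..<m}. of_nat ((m + 1) choose r) * c r * c (m - r + 1)))
            / (2 ^ (1 - (if m = 1 then 1 else 0)) * csqrt (a 0 * b 0)))"
  (is "?small \<longleftrightarrow> ?recursion")
proof -
  have "coeff (egf_poly n a) 0 \<noteq> 0"
    using a0 by (simp add: coeff_egf_poly)
  from poly_minus_of_real_mult_norm_poly_smallo_iff[OF this, of "egf_poly n c" n]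
  have "?small \<longleftrightarrow> c 0 = 0 \<and> (0 < n \<longrightarrow> c 1 = of_real (cmod (a 0))) \<and>
      (\<forall>k<n. coeff (poly_shift 1 (egf_poly n c) ^ 2 - egf_poly n a * map_poly cnj (egf_poly n a)) k = 0)"
    by (auto simp: coeff_egf_poly)
  also have "\<dots> \<longleftrightarrow> ?recursion"
    by (rule recursion_iff_egf_poly_square_coeffs[symmetric, OF a0 b])
  finally show ?thesis .
qed

theorem lemma9:
  fixes D :: "complex set" and fm :: "nat \<Rightarrow> complex \<Rightarrow> real" and n :: nat
    and F :: "complex \<Rightarrow> real \<Rightarrow> real"
  assumes "jordan_domain D"
    and "\<forall>m\<le>n. C2_on D (fm m)"
    and "\<forall>w\<in>D. f_ww (fm 0) w * f_wbwb (fm 0) w > 0"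
    and "F = (\<lambda>w t. \<Sum>m\<le>n. fm m w * t ^ m / fact m)"
  shows "(\<forall>w\<in>D. (\<lambda>t. f_wwb (\<lambda>z. F z t) w
                   - of_real t * csqrt (f_ww (\<lambda>z. F z t) w * f_wbwb (\<lambda>z. F z t) w))
                 \<in> o[at 0](\<lambda>t::real. (of_real t :: complex) ^ n))
     \<longleftrightarrow>
     (\<forall>m\<le>n. \<forall>w\<in>D. f_wwb (fm m) w =
        (of_nat m * (\<Sum>r<m. of_nat ((m - 1) choose r) * f_ww (fm r) w * f_wbwb (fm (m - r - 1)) w)
         - (1 / of_nat (m + 1)) *
           (\<Sum>r\<in>{2..<m}. of_nat ((m + 1) choose r) * f_wwb (fm r) w * f_wwb (fm (m - r + 1)) w))
        / (2 ^ (1 - (if m = 1 then 1 else 0)) * csqrt (f_ww (fm 0) w * f_wbwb (fm 0) w)))"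
proof -
  obtain \<gamma> where "simple_path \<gamma>" "D = inside (path_image \<gamma>)"
    using assms(1) unfolding jordan_domain_def by blast
  then have D: "open D"
    using open_inside closed_path_image simple_path_imp_path by blast
  have F: "(\<lambda>z. F z t) = (\<lambda>z. \<Sum>m\<le>n. fm m z * t ^ m / fact m)" for t
    using assms(4) by simp
  show ?thesis (is "(\<forall>w\<in>D. ?lhs w) \<longleftrightarrow> (\<forall>m\<le>n. \<forall>w\<in>D. ?rhs m w)")
  proof -
    have "?lhs w \<longleftrightarrow> (\<forall>m\<le>n. ?rhs m w)" if w: "w \<in> D" for w
    proof -
      have wbwb: "\<forall>m\<le>n. f_wbwb (fm m) w = cnj (f_ww (fm m) w)"
        using C2_on_second_wirtinger_derivatives(3)[OF D w] assms(2) by blast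
      with assms(3) w have "f_ww (fm 0) w \<noteq> 0" by auto
      from egf_poly_minus_norm_smallo_iff_recursion[OF this wbwb, of "\<lambda>m. f_wwb (fm m) w"]
      show ?thesis
        unfolding F second_wirtinger_derivatives_taylor[OF D w assms(2)] csqrt_mult_cnj .
    qed
    then show ?thesis by blast
  qed
qed

end
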